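(* Let $0\le\alpha\le1$ and let $a\in C(\mathbf{R})$ satisfy $\frac{a_1}{(1+|x|)^{\alpha}}\le a(x)\le \frac{a_2}{(1+|x|)^{\alpha}}$ for all $x\in\mathbf{R}$, with constants $a_1,a_2>0$, where in the case $\alpha=1$ it is assumed that $a_1>2$. Let $V\in C^1(\mathbf{R})$ be bounded with $V(x)>0$ and $xV'(x)\le0$ for all $x$. For positive constants $\varepsilon_1,\varepsilon_2,\varepsilon_3$ set $f(t)=\varepsilon_1(1+t)^2$, $g(t)=\varepsilon_2(1+t)$, $h(t,x)=\varepsilon_3(1+t)x\phi(x)$, where $\phi(x)=1$ for $|x|\le1$ and $\phi(x)=1/|x|$ for $|x|\ge1$, and let $$F_3(t,x)=g_{tt}(t)-g_t(t)a(x)-V(x)f_t(t)+2V(x)g(t)-V_x(x)h(t,x)-V(x)h_x(t,x).$$ Then there exist positive constants $\varepsilon_1,\varepsilon_2,\varepsilon_3$, $C$ and $t_0$ such that for all $t>t_0$ and all $x\in\mathbf{R}$ with $|x|\ne1$, $-F_3(t,x)\le C\,a(x)$. *)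

theory Defs
  imports "HOL-Analysis.Analysis"
begin

definition phi :: "real \<Rightarrow> real" where
  "phi x = (if \<bar>x\<bar> \<le> 1 then 1 else 1 / \<bar>x\<bar>)"

definition ff :: "real \<Rightarrow> real \<Rightarrow> real" where
  "ff e1 t = e1 * (1 + t)^2"

definition gg :: "real \<Rightarrow> real \<Rightarrow> real" where
  "gg e2 t = e2 * (1 + t)"

definition hh :: "real \<Rightarrow> real \<Rightarrow> real \<Rightarrow> real" where
  "hh e3 t x = e3 * (1 + t) * x * phi x"

definition F3 :: "real \<Rightarrow> real \<Rightarrow> real \<Rightarrow> (real \<Rightarrow> real) \<Rightarrow> (real \<Rightarrow> real) \<Rightarrow> real \<Rightarrow> real \<Rightarrow> real" where
  "F3 e1 e2 e3 a V t x =
     deriv (deriv (gg e2)) t - deriv (gg e2) t * a x - V x * deriv (ff e1) t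
     + 2 * V x * gg e2 t - deriv V x * hh e3 t x - V x * deriv (\<lambda>y. hh e3 t y) x"

end

theory Submission
  imports Defs
begin

text \<open>With \<open>\<epsilon>\<^sub>1 = 1\<close>, \<open>\<epsilon>\<^sub>2 = 2\<close>, \<open>\<epsilon>\<^sub>3 = 1\<close> the terms of \<open>-F\<^sub>3\<close> other than \<open>g\<^sub>t a\<close>
  are all nonpositive for \<open>t \<ge> -1\<close>: \<open>V\<^sub>x h\<close> has the sign of \<open>x V\<^sub>x \<le> 0\<close>, and
  \<open>V (f\<^sub>t - 2g + h\<^sub>x) = V (1 + t) (2\<epsilon>\<^sub>1 - 2\<epsilon>\<^sub>2 + \<epsilon>\<^sub>3 [|x| < 1]) \<le> 0\<close> because \<open>V > 0\<close>.
  Hence \<open>-F\<^sub>3 \<le> \<epsilon>\<^sub>2 a\<close>.\<close>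

lemma deriv_gg: "deriv (gg e2) t = e2"
  unfolding gg_def[abs_def] by (rule DERIV_imp_deriv) (auto intro!: derivative_eq_intros)

lemma deriv_deriv_gg: "deriv (deriv (gg e2)) t = 0"
  by (simp add: deriv_gg[abs_def])

lemma deriv_ff: "deriv (ff e1) t = 2 * e1 * (1 + t)"
  unfolding ff_def[abs_def] by (rule DERIV_imp_deriv) (auto intro!: derivative_eq_intros)

lemma has_field_derivative_mult_phi:
  assumes "\<bar>x\<bar> \<noteq> 1"
  shows "((\<lambda>y. y * phi y) has_field_derivative (if \<bar>x\<bar> < 1 then 1 else 0)) (at x)"
proof -
  consider "\<bar>x\<bar> < 1" | "x > 1" | "x < -1"
    using assms by linarith
  then show ?thesis
  proof cases
    case 1
    show ?thesis
      by (rule has_field_derivative_transform_within_open[of "\<lambda>y. y" _ _ "{-1<..<1}"])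
         (use 1 in \<open>auto simp: phi_def\<close>)
  next
    case 2
    show ?thesis
      by (rule has_field_derivative_transform_within_open[of "\<lambda>y. 1" _ _ "{1<..}"])
         (use 2 in \<open>auto simp: phi_def\<close>)
  next
    case 3
    show ?thesis
      by (rule has_field_derivative_transform_within_open[of "\<lambda>y. -1" _ _ "{..<-1}"])
         (use 3 in \<open>auto simp: phi_def\<close>)
  qed
qed

lemma deriv_hh:
  assumes "\<bar>x\<bar> \<noteq> 1"
  shows "deriv (\<lambda>y. hh e3 t y) x = (if \<bar>x\<bar> < 1 then e3 * (1 + t) else 0)"
proof -
  have "((\<lambda>y. e3 * (1 + t) * (y * phi y)) has_field_derivative
          e3 * (1 + t) * (if \<bar>x\<bar> < 1 then 1 else 0)) (at x)"
    using has_field_derivative_mult_phi[OF assms] by (rule DERIV_cmult)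
  then have "deriv (\<lambda>y. hh e3 t y) x = e3 * (1 + t) * (if \<bar>x\<bar> < 1 then 1 else 0)"
    by (intro DERIV_imp_deriv) (simp add: hh_def[abs_def] mult.assoc)
  then show ?thesis
    by simp
qed

lemma neg_F3_eq:
  assumes "\<bar>x\<bar> \<noteq> 1"
  shows "- F3 e1 e2 e3 a V t x = e2 * a x + deriv V x * hh e3 t x
           + V x * (1 + t) * (2 * e1 - 2 * e2 + (if \<bar>x\<bar> < 1 then e3 else 0))"
  unfolding F3_def deriv_deriv_gg deriv_gg deriv_ff deriv_hh[OF assms]
  by (simp add: gg_def algebra_simps)

lemma deriv_mult_hh_nonpos:
  assumes "x * deriv V x \<le> 0" and "e3 \<ge> 0" and "t \<ge> -1"
  shows "deriv V x * hh e3 t x \<le> 0"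
proof -
  have "deriv V x * hh e3 t x = (e3 * (1 + t) * phi x) * (x * deriv V x)"
    by (simp add: hh_def)
  also have "\<dots> \<le> 0"
    using assms(2,3) by (intro mult_nonneg_nonpos[OF _ assms(1)]) (auto simp: phi_def)
  finally show ?thesis .
qed

lemma neg_F3_le:
  assumes "\<bar>x\<bar> \<noteq> 1" and "V x > 0" and "x * deriv V x \<le> 0"
    and "e3 \<ge> 0" and "2 * e1 + e3 \<le> 2 * e2" and "t \<ge> -1"
  shows "- F3 e1 e2 e3 a V t x \<le> e2 * a x"
proof -
  have "V x * (1 + t) * (2 * e1 - 2 * e2 + (if \<bar>x\<bar> < 1 then e3 else 0)) \<le> 0"
    using assms(2,4-6) by (intro mult_nonneg_nonpos) auto
  with deriv_mult_hh_nonpos[OF assms(3,4,6)] show ?thesis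
    unfolding neg_F3_eq[OF assms(1)] by linarith
qed

theorem lemma2p3:
  fixes a V :: "real \<Rightarrow> real" and alpha a1 a2 :: real
  assumes "0 \<le> alpha" "alpha \<le> 1"
    and "continuous_on UNIV a"
    and "a1 > 0" "a2 > 0"
    and "\<And>x. a1 / (1 + \<bar>x\<bar>) powr alpha \<le> a x"
    and "\<And>x. a x \<le> a2 / (1 + \<bar>x\<bar>) powr alpha"
    and "alpha = 1 \<Longrightarrow> a1 > 2"
    and "\<And>x. V differentiable (at x)"
    and "continuous_on UNIV (deriv V)"
    and "bounded (range V)"
    and "\<And>x. V x > 0"
    and "\<And>x. x * deriv V x \<le> 0"
  shows "\<exists>e1 e2 e3 C t0. e1 > 0 \<and> e2 > 0 \<and> e3 > 0 \<and> C > 0 \<and> t0 > 0 \<and>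
           (\<forall>t > t0. \<forall>x. \<bar>x\<bar> \<noteq> 1 \<longrightarrow> - F3 e1 e2 e3 a V t x \<le> C * a x)"
proof -
  have "- F3 1 2 1 a V t x \<le> 2 * a x" if "t > 1" and "\<bar>x\<bar> \<noteq> 1" for t x
    using that assms(12,13) by (intro neg_F3_le) auto
  then show ?thesis
    by (intro exI[of _ 1] exI[of _ 2] exI[of _ 1] exI[of _ 2] exI[of _ 1]) auto
qed

end
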